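(* Let $f:[0,\infty)\to\mathbb{R}$ be convex with $f(1)=0$ and $G:[0,\mathsf{D_m}(f))\to[0,\infty)$ non-decreasing with $G(0)=0$. Let $W_{Y|X}$ be a channel between finite alphabets $\mathcal{X},\mathcal{Y}$ that is permutation invariant, i.e., for every permutation $\pi$ of $\mathcal{X}$ there is a permutation $\pi'$ of $\mathcal{Y}$ with $W_{Y|X}(\pi'(y)|\pi(x))=W_{Y|X}(y|x)$ for all $x,y$. Then the uniform distribution on $\mathcal{X}$ maximizes $p_X\mapsto I_{G,f}(X;Y)$, where $Y$ is the output of $W_{Y|X}$ with input $X\sim p_X$.
   Context: For distributions $p\ll q$ on a finite set, $D_f(p\|q)=\sum_y q(y) f(p(y)/q(y))$ with $0f(0/0)=0$; $\mathsf{D_m}(f)=f(0)+\lim_{t\to\infty}f(t)/t$. $I_{G,f}(X;Y)=\min_{q_Y}\sum_x p_X(x)\,G(D_f(W_{Y|X=x}\|q_Y))$. *)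

theory Defs
  imports "HOL-Analysis.Analysis"
begin

definition is_dist :: "('a::finite \<Rightarrow> real) \<Rightarrow> bool" where
  "is_dist p \<longleftrightarrow> (\<forall>a. 0 \<le> p a) \<and> (\<Sum>a\<in>UNIV. p a) = 1"

text \<open>Channel W(y|x) = W x y: every row is a distribution.\<close>
definition is_channel :: "('x::finite \<Rightarrow> 'y::finite \<Rightarrow> real) \<Rightarrow> bool" where
  "is_channel W \<longleftrightarrow> (\<forall>x. is_dist (W x))"

definition abs_cont :: "('a \<Rightarrow> real) \<Rightarrow> ('a \<Rightarrow> real) \<Rightarrow> bool" where
  "abs_cont p q \<longleftrightarrow> (\<forall>a. q a = 0 \<longrightarrow> p a = 0)"

text \<open>f-divergence D_f(p||q) = sum_y q(y) f(p(y)/q(y)) (for p << q); terms with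
  q(y) = 0 (hence p(y) = 0) vanish, matching the convention 0 f(0/0) = 0.\<close>
definition fdiv :: "(real \<Rightarrow> real) \<Rightarrow> ('a::finite \<Rightarrow> real) \<Rightarrow> ('a \<Rightarrow> real) \<Rightarrow> real" where
  "fdiv f p q = (\<Sum>a\<in>UNIV. q a * f (p a / q a))"

definition Dm :: "(real \<Rightarrow> real) \<Rightarrow> ereal" where
  "Dm f = ereal (f 0) + Lim at_top (\<lambda>t. ereal (f t / t))"

text \<open>I_{G,f}(X;Y) = min over output distributions q_Y (for which all divergences in
  the objective are defined, i.e. W(.|x) << q_Y for x in the support of p_X) of
  sum_x p_X(x) G(D_f(W(.|x) || q_Y)); the minimum is rendered as an infimum.\<close>
definition I_Gf :: "(real \<Rightarrow> real) \<Rightarrow> (real \<Rightarrow> real) \<Rightarrow> ('x::finite \<Rightarrow> 'y::finite \<Rightarrow> real)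
    \<Rightarrow> ('x \<Rightarrow> real) \<Rightarrow> real" where
  "I_Gf G f W p = (INF q \<in> {q. is_dist q \<and> (\<forall>x. 0 < p x \<longrightarrow> abs_cont (W x) q)}.
       (\<Sum>x\<in>UNIV. p x * G (fdiv f (W x) q)))"

end

theory Submission imports Defs begin

(* For a convex f on [0, oo) the slopes (f t - f 0) / t increase to D_m(f) - f(0). Jensen gives
   D_f(P||q) >= 0, and D_f(P||q) <= f(0) + slope at any T bounding the ratios P/q; so
   D_f(P||q) >= D_m(f) makes the slopes stall beyond T, which together with convexity and f(1) = 0
   forces D_f(P||q) = 0. Hence G is only evaluated where it is nonnegative, the objective is
   bounded below, and I_{G,f}(p) is at most the objective at any feasible q.
   Let q be feasible for the uniform input, sigma a permutation of X and sigma' its companion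
   on Y. Then q o sigma' is feasible for p and has objective sum_x p(x) G(D_f(W(.|sigma x)||q)).
   Averaging over all sigma spreads the weights p evenly over X, which yields the uniform
   objective at q. *)

lemma convex_on_slope_from_0_mono:
  fixes f :: "real \<Rightarrow> real"
  assumes "convex_on {0..} f" and "0 < s" and "s \<le> t"
  shows "(f s - f 0) / s \<le> (f t - f 0) / t"
proof (cases "s = t")
  case False
  have swap: "(f 0 - f u) / (0 - u) = (f u - f 0) / u" for u
    by (metis diff_0 minus_diff_eq minus_divide_divide)
  have "(f 0 - f s) / (0 - s) \<le> (f 0 - f t) / (0 - t)"
    using assms False by (intro convex_on_slope_le(1)) auto
  then show ?thesis
    by (simp only: swap)
qed simp

lemma convex_on_le_secant_from_0:
  fixes f :: "real \<Rightarrow> real"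
  assumes "convex_on {0..} f" and "0 \<le> s" and "s \<le> T" and "0 < T"
  shows "f s \<le> f 0 + s * ((f T - f 0) / T)"
proof -
  have "convex_on {0..T} f"
    using assms(1) by (rule convex_on_subset) auto
  then show ?thesis
    using convex_onD_Icc'[of 0 T f s] assms by (simp add: mult.commute)
qed

lemma convex_on_above_secant_if_slope_stalls:
  fixes f :: "real \<Rightarrow> real"
  assumes f: "convex_on {0..} f" and a: "0 < a" "a < T"
    and stall: "(f (2*T) - f 0) / (2*T) \<le> (f T - f 0) / T"
  shows "f 0 + a * ((f T - f 0) / T) \<le> f a"
proof -
  define s1 where "s1 = (f T - f 0) / T"
  define s2 where "s2 = (f (2*T) - f 0) / (2*T)"
  have fT: "f T = f 0 + T * s1" and f2T: "f (2*T) = f 0 + 2 * T * s2"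
    using a unfolding s1_def s2_def by (simp_all add: field_simps)
  have "(f (2*T) - f a) / (2*T - a) = (f a - f (2*T)) / (a - 2*T)"
    by (metis minus_diff_eq minus_divide_divide)
  also have "\<dots> \<le> (f T - f (2*T)) / (T - 2*T)"
    using a by (intro convex_on_slope_le(2)[OF f]) auto
  also have "\<dots> = 2 * s2 - s1"
    unfolding fT f2T using a by (simp add: field_simps)
  finally have "f (2*T) - f a \<le> (2 * s2 - s1) * (2*T - a)"
    using a by (simp add: pos_divide_le_eq)
  then have "f 0 + a * s1 - f a \<le> 2 * (T - a) * (s2 - s1)"
    unfolding f2T by (simp add: algebra_simps)
  also have "\<dots> \<le> 0"
    using a stall by (intro mult_nonneg_nonpos) (auto simp: s1_def s2_def)
  finally show ?thesis by (simp add: s1_def)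
qed

lemma tendsto_at_top_SUP_if_mono_on:
  fixes g :: "real \<Rightarrow> 'a::{complete_linorder,linorder_topology}"
  assumes "mono_on {c<..} g"
  shows "(g \<longlongrightarrow> (SUP t\<in>{c<..}. g t)) at_top"
proof (rule order_tendstoI)
  fix a assume "a < (SUP t\<in>{c<..}. g t)"
  then obtain t where t: "c < t" "a < g t"
    by (auto simp: less_SUP_iff)
  show "\<forall>\<^sub>F x in at_top. a < g x"
    using eventually_ge_at_top[of t]
  proof eventually_elim
    case (elim x)
    then have "g t \<le> g x"
      using t(1) by (intro mono_onD[OF assms]) auto
    with t(2) show ?case
      by (rule less_le_trans)
  qed
next
  fix a assume less_a: "(SUP t\<in>{c<..}. g t) < a"
  show "\<forall>\<^sub>F x in at_top. g x < a"
    using eventually_gt_at_top[of c]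
  proof eventually_elim
    case (elim x)
    then have "g x \<le> (SUP t\<in>{c<..}. g t)"
      by (intro SUP_upper) auto
    then show ?case
      using less_a by (rule le_less_trans)
  qed
qed

lemma Dm_eq_SUP_slope:
  fixes f :: "real \<Rightarrow> real"
  assumes f: "convex_on {0..} f"
  shows "Dm f = ereal (f 0) + (SUP t\<in>{0<..}. ereal ((f t - f 0) / t))"
proof -
  define S where "S = (SUP t\<in>{0<..}. ereal ((f t - f 0) / t))"
  have "((\<lambda>t. ereal ((f t - f 0) / t)) \<longlongrightarrow> S) at_top"
    unfolding S_def using convex_on_slope_from_0_mono[OF f]
    by (intro tendsto_at_top_SUP_if_mono_on) (auto intro: mono_onI)
  moreover have "((\<lambda>t. ereal (f 0 / t)) \<longlongrightarrow> ereal 0) at_top"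
    unfolding lim_ereal
    by (intro tendsto_divide_0[OF tendsto_const] filterlim_at_top_imp_at_infinity filterlim_ident)
  moreover have "ereal (f 1 - f 0) \<le> S"
    unfolding S_def using SUP_upper[of 1 "{0<..}" "\<lambda>t. ereal ((f t - f 0) / t)"] by simp
  then have "S \<noteq> -\<infinity>"
    by auto
  ultimately have sum_lim:
      "((\<lambda>t. ereal ((f t - f 0) / t) + ereal (f 0 / t)) \<longlongrightarrow> S + ereal 0) at_top"
    by (intro tendsto_add_ereal_nonneg) auto
  have "\<forall>\<^sub>F t in at_top. ereal ((f t - f 0) / t) + ereal (f 0 / t) = ereal (f t / t)"
    using eventually_gt_at_top[of 0] by eventually_elim (simp add: field_simps)
  from tendsto_cong[OF this] sum_lim have "((\<lambda>t. ereal (f t / t)) \<longlongrightarrow> S) at_top"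
    by simp
  then show ?thesis
    unfolding Dm_def S_def by (simp add: tendsto_Lim)
qed

lemma slope_from_0_le_Dm:
  fixes f :: "real \<Rightarrow> real"
  assumes "convex_on {0..} f" and "0 < t"
  shows "ereal (f 0 + (f t - f 0) / t) \<le> Dm f"
proof -
  have "ereal ((f t - f 0) / t) \<le> (SUP t\<in>{0<..}. ereal ((f t - f 0) / t))"
    using assms(2) by (intro SUP_upper) auto
  then show ?thesis
    unfolding Dm_eq_SUP_slope[OF assms(1)] by (metis add_left_mono plus_ereal.simps(1))
qed

lemma ratio_mult_eq_if_abs_cont:
  assumes "abs_cont P q"
  shows "q y * (P y / q y) = P y"
  using assms by (cases "q y = 0") (auto simp: abs_cont_def)

lemma fdiv_nonneg:
  fixes f :: "real \<Rightarrow> real" and P q :: "'a::finite \<Rightarrow> real"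
  assumes f: "convex_on {0..} f" and f1: "f 1 = 0"
    and P: "is_dist P" and q: "is_dist q" and ac: "abs_cont P q"
  shows "0 \<le> fdiv f P q"
proof -
  have "f (\<Sum>y\<in>UNIV. q y *\<^sub>R (P y / q y)) \<le> (\<Sum>y\<in>UNIV. q y * f (P y / q y))"
    using P q by (intro convex_on_sum[OF _ _ f]) (auto simp: is_dist_def)
  moreover have "(\<Sum>y\<in>UNIV. q y *\<^sub>R (P y / q y)) = 1"
    using P by (simp only: real_scaleR_def ratio_mult_eq_if_abs_cont[OF ac]) (simp add: is_dist_def)
  ultimately show ?thesis
    by (simp add: fdiv_def f1)
qed

lemma fdiv_le_slope_from_0:
  fixes f :: "real \<Rightarrow> real" and P q :: "'a::finite \<Rightarrow> real"
  assumes f: "convex_on {0..} f"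
    and P: "is_dist P" and q: "is_dist q" and ac: "abs_cont P q"
    and T: "0 < T" and ratio_le: "\<And>y. P y / q y \<le> T"
  shows "fdiv f P q \<le> f 0 + (f T - f 0) / T"
proof -
  have q_nonneg: "0 \<le> q y" and P_nonneg: "0 \<le> P y" for y
    using P q by (auto simp: is_dist_def)
  define c where "c = (f T - f 0) / T"
  have "fdiv f P q \<le> (\<Sum>y\<in>UNIV. q y * (f 0 + P y / q y * c))"
    unfolding fdiv_def
  proof (intro sum_mono mult_left_mono)
    fix y
    show "f (P y / q y) \<le> f 0 + P y / q y * c"
      unfolding c_def using P_nonneg q_nonneg ratio_le T
      by (intro convex_on_le_secant_from_0[OF f]) auto
  qed (rule q_nonneg)
  also have "\<dots> = (\<Sum>y\<in>UNIV. q y * f 0 + P y * c)"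
    by (simp only: distrib_left mult.assoc[symmetric] ratio_mult_eq_if_abs_cont[OF ac])
  also have "\<dots> = (\<Sum>y\<in>UNIV. q y) * f 0 + (\<Sum>y\<in>UNIV. P y) * c"
    by (simp add: sum.distrib sum_distrib_right)
  also have "\<dots> = f 0 + c"
    using P q by (simp add: is_dist_def)
  finally show ?thesis
    by (simp add: c_def)
qed

lemma fdiv_eq_0_if_Dm_le:
  fixes f :: "real \<Rightarrow> real" and P q :: "'a::finite \<Rightarrow> real"
  assumes f: "convex_on {0..} f" and f1: "f 1 = 0"
    and P: "is_dist P" and q: "is_dist q" and ac: "abs_cont P q"
    and Dm_le: "Dm f \<le> ereal (fdiv f P q)"
  shows "fdiv f P q = 0"
proof -
  have ratio_nonneg: "0 \<le> P y / q y" for y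
    using P q by (simp add: is_dist_def)
  define T where "T = 2 + (\<Sum>y\<in>UNIV. P y / q y)"
  have ratio_le: "P y / q y \<le> T" for y
  proof -
    have "P y / q y \<le> (\<Sum>y\<in>UNIV. P y / q y)"
      by (rule member_le_sum) (simp_all add: ratio_nonneg)
    then show ?thesis
      by (simp add: T_def)
  qed
  have "1 < T"
    using ratio_nonneg by (simp add: T_def sum_nonneg add_pos_nonneg)
  have upper: "fdiv f P q \<le> f 0 + (f T - f 0) / T"
    using \<open>1 < T\<close> by (intro fdiv_le_slope_from_0[OF f P q ac _ ratio_le]) auto
  have "f 0 + (f (2*T) - f 0) / (2*T) \<le> fdiv f P q"
    using order_trans[OF slope_from_0_le_Dm[OF f, of "2*T"] Dm_le] \<open>1 < T\<close> by simp
  with upper have stall: "(f (2*T) - f 0) / (2*T) \<le> (f T - f 0) / T"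
    by simp
  have "f 0 + 1 * ((f T - f 0) / T) \<le> f 1"
    using \<open>1 < T\<close> by (intro convex_on_above_secant_if_slope_stalls[OF f _ _ stall]) auto
  with upper f1 fdiv_nonneg[OF f f1 P q ac] show ?thesis
    by simp
qed

lemma G_fdiv_nonneg:
  fixes f G :: "real \<Rightarrow> real" and P q :: "'a::finite \<Rightarrow> real"
  assumes f: "convex_on {0..} f" and f1: "f 1 = 0"
    and G_nonneg: "\<And>a. 0 \<le> a \<Longrightarrow> ereal a < Dm f \<Longrightarrow> 0 \<le> G a" and G_zero: "G 0 = 0"
    and P: "is_dist P" and q: "is_dist q" and ac: "abs_cont P q"
  shows "0 \<le> G (fdiv f P q)"
proof (cases "ereal (fdiv f P q) < Dm f")
  case True
  then show ?thesis
    using G_nonneg fdiv_nonneg[OF f f1 P q ac] by blast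
next
  case False
  then show ?thesis
    using fdiv_eq_0_if_Dm_le[OF f f1 P q ac] G_zero by (simp add: not_less)
qed

lemma is_dist_comp_bij:
  assumes "is_dist p" and "bij h"
  shows "is_dist (p \<circ> h)"
  using assms by (simp add: is_dist_def sum.reindex_bij_betw)

lemma abs_cont_comp:
  assumes "abs_cont P q"
  shows "abs_cont (P \<circ> h) (q \<circ> h)"
  using assms by (simp add: abs_cont_def)

lemma fdiv_comp_bij:
  assumes "bij h"
  shows "fdiv f (P \<circ> h) (q \<circ> h) = fdiv f P q"
  unfolding fdiv_def using sum.reindex_bij_betw[OF assms, of "\<lambda>y. q y * f (P y / q y)"] by simp

lemma sum_bij_apply_independent:
  fixes g :: "'a::finite \<Rightarrow> 'b::comm_monoid_add" and x y :: 'a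
  shows "(\<Sum>\<sigma>\<in>{\<sigma>. bij \<sigma>}. g (\<sigma> x)) = (\<Sum>\<sigma>\<in>{\<sigma>. bij \<sigma>}. g (\<sigma> y))"
proof -
  define \<tau> where "\<tau> = Transposition.transpose x y"
  show ?thesis
    by (rule sum.reindex_bij_witness[of _ "\<lambda>\<sigma>. \<sigma> \<circ> \<tau>" "\<lambda>\<sigma>. \<sigma> \<circ> \<tau>"])
      (auto simp: \<tau>_def comp_assoc bij_comp)
qed

lemma CARD_mult_sum_bij_apply:
  fixes g :: "'a::finite \<Rightarrow> 'b::comm_semiring_1" and x :: 'a
  shows "of_nat CARD('a) * (\<Sum>\<sigma>\<in>{\<sigma>. bij \<sigma>}. g (\<sigma> x))
    = of_nat (card {\<sigma>::'a \<Rightarrow> 'a. bij \<sigma>}) * (\<Sum>y\<in>UNIV. g y)"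
proof -
  have "of_nat CARD('a) * (\<Sum>\<sigma>\<in>{\<sigma>. bij \<sigma>}. g (\<sigma> x))
      = (\<Sum>z\<in>(UNIV :: 'a set). \<Sum>\<sigma>\<in>{\<sigma>. bij \<sigma>}. g (\<sigma> x))"
    by simp
  also have "\<dots> = (\<Sum>z\<in>UNIV. \<Sum>\<sigma>\<in>{\<sigma>::'a \<Rightarrow> 'a. bij \<sigma>}. g (\<sigma> z))"
    by (intro sum.cong refl sum_bij_apply_independent)
  also have "\<dots> = (\<Sum>\<sigma>\<in>{\<sigma>::'a \<Rightarrow> 'a. bij \<sigma>}. \<Sum>z\<in>UNIV. g (\<sigma> z))"
    by (rule sum.swap)
  also have "\<dots> = (\<Sum>\<sigma>\<in>{\<sigma>::'a \<Rightarrow> 'a. bij \<sigma>}. \<Sum>y\<in>UNIV. g y)"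
    by (rule sum.cong[OF refl]) (simp add: sum.reindex_bij_betw)
  finally show ?thesis
    by simp
qed

lemma le_uniform_average_if_le_permuted:
  fixes p g :: "'a::finite \<Rightarrow> real"
  assumes p_sum: "(\<Sum>x\<in>UNIV. p x) = 1"
    and le_permuted: "\<And>\<sigma>. bij \<sigma> \<Longrightarrow> a \<le> (\<Sum>x\<in>UNIV. p x * g (\<sigma> x))"
  shows "a \<le> (\<Sum>x\<in>UNIV. 1 / real CARD('a) * g x)"
proof -
  define N where "N = real (card {\<sigma>::'a \<Rightarrow> 'a. bij \<sigma>})"
  have "0 < N"
    unfolding N_def using bij_id by (auto simp: card_gt_0_iff)
  have average:
      "(\<Sum>\<sigma>\<in>{\<sigma>. bij \<sigma>}. g (\<sigma> x)) = N / real CARD('a) * (\<Sum>y\<in>UNIV. g y)" for x :: 'a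
    using CARD_mult_sum_bij_apply[of g x] by (simp add: N_def field_simps)
  have "N * a = (\<Sum>\<sigma>\<in>{\<sigma>::'a \<Rightarrow> 'a. bij \<sigma>}. a)"
    by (simp add: N_def)
  also have "\<dots> \<le> (\<Sum>\<sigma>\<in>{\<sigma>. bij \<sigma>}. \<Sum>x\<in>UNIV. p x * g (\<sigma> x))"
    by (intro sum_mono le_permuted) simp
  also have "\<dots> = (\<Sum>x\<in>UNIV. p x * (\<Sum>\<sigma>\<in>{\<sigma>. bij \<sigma>}. g (\<sigma> x)))"
    by (subst sum.swap) (simp add: sum_distrib_left)
  also have "\<dots> = N * (\<Sum>y\<in>UNIV. 1 / real CARD('a) * g y)"
    by (simp add: average sum_distrib_right[symmetric] sum_divide_distrib[symmetric] p_sum)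
  finally show ?thesis
    using \<open>0 < N\<close> by simp
qed

lemma I_Gf_le_objective:
  fixes f G :: "real \<Rightarrow> real" and W :: "'x::finite \<Rightarrow> 'y::finite \<Rightarrow> real"
  assumes f: "convex_on {0..} f" and f1: "f 1 = 0"
    and G_nonneg: "\<And>a. 0 \<le> a \<Longrightarrow> ereal a < Dm f \<Longrightarrow> 0 \<le> G a" and G_zero: "G 0 = 0"
    and W: "is_channel W" and p_nonneg: "\<And>x. 0 \<le> p x"
    and q: "is_dist q" and ac: "\<And>x. 0 < p x \<Longrightarrow> abs_cont (W x) q"
  shows "I_Gf G f W p \<le> (\<Sum>x\<in>UNIV. p x * G (fdiv f (W x) q))"
  unfolding I_Gf_def
proof (rule cINF_lower)
  show "bdd_below ((\<lambda>q. \<Sum>x\<in>UNIV. p x * G (fdiv f (W x) q))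
      ` {q. is_dist q \<and> (\<forall>x. 0 < p x \<longrightarrow> abs_cont (W x) q)})"
  proof (rule bdd_belowI2)
    fix q' assume "q' \<in> {q. is_dist q \<and> (\<forall>x. 0 < p x \<longrightarrow> abs_cont (W x) q)}"
    then have q': "is_dist q'" and ac': "\<And>x. 0 < p x \<Longrightarrow> abs_cont (W x) q'"
      by auto
    show "0 \<le> (\<Sum>x\<in>UNIV. p x * G (fdiv f (W x) q'))"
    proof (rule sum_nonneg)
      fix x
      show "0 \<le> p x * G (fdiv f (W x) q')"
      proof (cases "p x = 0")
        case False
        with p_nonneg[of x] have "0 < p x"
          by simp
        with W q' ac' have "0 \<le> G (fdiv f (W x) q')"
          by (intro G_fdiv_nonneg[where f = f and G = G, OF f f1 G_nonneg G_zero])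
            (auto simp: is_channel_def)
        with p_nonneg[of x] show ?thesis
          by simp
      qed simp
    qed
  qed
qed (use q ac in simp)

lemma I_Gf_le_relabelled_objective:
  fixes f G :: "real \<Rightarrow> real" and W :: "'x::finite \<Rightarrow> 'y::finite \<Rightarrow> real"
  assumes f: "convex_on {0..} f" and f1: "f 1 = 0"
    and G_nonneg: "\<And>a. 0 \<le> a \<Longrightarrow> ereal a < Dm f \<Longrightarrow> 0 \<le> G a" and G_zero: "G 0 = 0"
    and W: "is_channel W" and p_nonneg: "\<And>x. 0 \<le> p x"
    and relabel: "bij \<sigma>'" "\<And>x y. W (\<sigma> x) (\<sigma>' y) = W x y"
    and q: "is_dist q" and ac: "\<And>x. abs_cont (W x) q"
  shows "I_Gf G f W p \<le> (\<Sum>x\<in>UNIV. p x * G (fdiv f (W (\<sigma> x)) q))"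
proof -
  have W_relabel: "W (\<sigma> x) \<circ> \<sigma>' = W x" for x
    using relabel(2) by (simp add: fun_eq_iff)
  have ac': "abs_cont (W x) (q \<circ> \<sigma>')" for x
    using abs_cont_comp[OF ac[of "\<sigma> x"], of \<sigma>'] by (simp only: W_relabel)
  have fdiv_relabel: "fdiv f (W x) (q \<circ> \<sigma>') = fdiv f (W (\<sigma> x)) q" for x
    using fdiv_comp_bij[OF relabel(1), of f "W (\<sigma> x)" q] by (simp only: W_relabel)
  have "I_Gf G f W p \<le> (\<Sum>x\<in>UNIV. p x * G (fdiv f (W x) (q \<circ> \<sigma>')))"
    using is_dist_comp_bij[OF q relabel(1)] ac'
    by (intro I_Gf_le_objective[where f = f and G = G, OF f f1 G_nonneg G_zero W p_nonneg])
  then show ?thesis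
    by (simp only: fdiv_relabel)
qed

theorem proposition1:
  fixes f :: "real \<Rightarrow> real" and G :: "real \<Rightarrow> real"
    and W :: "'x::finite \<Rightarrow> 'y::finite \<Rightarrow> real"
  assumes f_convex: "convex_on {0..} f"
    and f_one: "f 1 = 0"
    and G_nonneg: "\<And>a. 0 \<le> a \<Longrightarrow> ereal a < Dm f \<Longrightarrow> 0 \<le> G a"
    and G_mono: "\<And>a b. 0 \<le> a \<Longrightarrow> a \<le> b \<Longrightarrow> ereal b < Dm f \<Longrightarrow> G a \<le> G b"
    and G_zero: "G 0 = 0"
    and W_channel: "is_channel W"
    and W_perm_inv: "\<And>\<pi>. bij (\<pi> :: 'x \<Rightarrow> 'x) \<Longrightarrow>
        \<exists>\<pi>' :: 'y \<Rightarrow> 'y. bij \<pi>' \<and> (\<forall>x y. W (\<pi> x) (\<pi>' y) = W x y)"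
    and p_dist: "is_dist p"
  shows "I_Gf G f W p \<le> I_Gf G f W (\<lambda>_. 1 / real CARD('x))"
proof -
  have le_uniform_objective:
      "I_Gf G f W p \<le> (\<Sum>x\<in>UNIV. 1 / real CARD('x) * G (fdiv f (W x) q))"
    if q: "is_dist q" and ac: "\<forall>x. abs_cont (W x) q" for q
  proof (rule le_uniform_average_if_le_permuted)
    show "(\<Sum>x\<in>UNIV. p x) = 1"
      using p_dist by (simp add: is_dist_def)
  next
    fix \<sigma> :: "'x \<Rightarrow> 'x" assume "bij \<sigma>"
    then obtain \<sigma>' where "bij \<sigma>'" "\<forall>x y. W (\<sigma> x) (\<sigma>' y) = W x y"
      using W_perm_inv by blast
    with q ac p_dist show "I_Gf G f W p \<le> (\<Sum>x\<in>UNIV. p x * G (fdiv f (W (\<sigma> x)) q))"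
      by (intro I_Gf_le_relabelled_objective[where f = f and G = G,
            OF f_convex f_one G_nonneg G_zero W_channel])
        (auto simp: is_dist_def)
  qed
  have "is_dist (\<lambda>_::'y. 1 / real CARD('y)) \<and> (\<forall>x. abs_cont (W x) (\<lambda>_. 1 / real CARD('y)))"
    by (simp add: is_dist_def abs_cont_def)
  then have "I_Gf G f W p \<le> (INF q\<in>{q. is_dist q \<and> (\<forall>x. abs_cont (W x) q)}.
      \<Sum>x\<in>UNIV. 1 / real CARD('x) * G (fdiv f (W x) q))"
    by (intro cINF_greatest) (blast intro: le_uniform_objective)+
  then show ?thesis
    by (simp add: I_Gf_def[of G f W "\<lambda>_. 1 / real CARD('x)"])
qed

end
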